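(* Let $z_1,z_2,z_3$ be three distinct complex numbers and let $w_1,w_2,w_3$ be three distinct complex numbers. Suppose that the 4-point sets $\{z_1,z_2,z_3,\infty\}$ and $\{w_1,w_2,w_3,\infty\}$ in the Riemann sphere $\widehat{\mathbb{C}}$ are Möbius equivalent, i.e. there is a Möbius transformation $\mu$ with $\mu(\{z_1,z_2,z_3,\infty\})=\{w_1,w_2,w_3,\infty\}$. Then there exists an affine transformation $T(z)=az+b$ with $a,b\in\mathbb{C}$, $a\neq 0$, such that $T(\{z_1,z_2,z_3\})=\{w_1,w_2,w_3\}$.
   Context: A Möbius transformation is a map $z\mapsto \frac{\alpha z+\beta}{\gamma z+\delta}$ of $\widehat{\mathbb{C}}=\mathbb{C}\cup\{\infty\}$ with $\alpha\delta-\beta\gamma\neq 0$. *)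

theory Defs
  imports Complex_Main
begin

text \<open>The Riemann sphere is modelled as complex option: Some z is the finite point z,
  None is the point at infinity.\<close>

type_synonym riemann_sphere = "complex option"

definition moebius_app ::
  "complex \<Rightarrow> complex \<Rightarrow> complex \<Rightarrow> complex \<Rightarrow> riemann_sphere \<Rightarrow> riemann_sphere" where
  "moebius_app \<alpha> \<beta> \<gamma> \<delta> p =
     (case p of
        None \<Rightarrow> (if \<gamma> = 0 then None else Some (\<alpha> / \<gamma>))
      | Some z \<Rightarrow> (if \<gamma> * z + \<delta> = 0 then None else Some ((\<alpha> * z + \<beta>) / (\<gamma> * z + \<delta>))))"

definition moebius_equivalent :: "riemann_sphere set \<Rightarrow> riemann_sphere set \<Rightarrow> bool" where
  "moebius_equivalent A B \<longleftrightarrow>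
     (\<exists>\<alpha> \<beta> \<gamma> \<delta>. \<alpha> * \<delta> - \<beta> * \<gamma> \<noteq> 0 \<and> moebius_app \<alpha> \<beta> \<gamma> \<delta> ` A = B)"

end

theory Submission
  imports Defs
begin

text \<open>If \<mu> fixes \<infinity>, it is affine. Otherwise \<mu>(\<infinity>) is one of the w's, say p, and we compose
  \<mu> with the involution u \<mapsto> p + (q - p)(r - p)/(u - p), which swaps p with \<infinity> and q with r,
  hence preserves {p, q, r, \<infinity>}. The composite fixes \<infinity>, so it is affine. An injective map of
  a three-point set into a three-point set is onto.\<close>

lemma moebius_app_finite:
  "\<gamma> * z + \<delta> \<noteq> 0 \<Longrightarrow> moebius_app \<alpha> \<beta> \<gamma> \<delta> (Some z) = Some ((\<alpha> * z + \<beta>) / (\<gamma> * z + \<delta>))"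
  by (simp add: moebius_app_def)

lemma moebius_app_infinity:
  "\<gamma> \<noteq> 0 \<Longrightarrow> moebius_app \<alpha> \<beta> \<gamma> \<delta> None = Some (\<alpha> / \<gamma>)"
  by (simp add: moebius_app_def)

lemma three_point_set_enumeration_from:
  assumes "p \<in> {w1, w2, w3}" and "distinct [w1, w2, w3]"
  shows "\<exists>q r. distinct [p, q, r] \<and> {w1, w2, w3} = {p, q, r}"
  using assms by (auto simp: insert_commute)

lemma three_point_involution_swaps:
  fixes p q r u :: complex
  assumes "distinct [p, q, r]" and "u \<in> {q, r}"
  shows "p + (q - p) * (r - p) / (u - p) \<in> {q, r}"
  using assms by auto

lemma moebius_minus_image_of_infinity:
  fixes \<alpha> \<beta> \<gamma> \<delta> z :: complex
  assumes "\<gamma> \<noteq> 0" and "\<gamma> * z + \<delta> \<noteq> 0"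
  shows "(\<alpha> * z + \<beta>) / (\<gamma> * z + \<delta>) - \<alpha> / \<gamma> = (\<beta> * \<gamma> - \<alpha> * \<delta>) / (\<gamma> * (\<gamma> * z + \<delta>))"
  using assms by (simp add: field_simps)

lemma affine_image_eq_if_subset:
  fixes a b :: complex
  assumes "a \<noteq> 0" and "finite W" and "card Z = card W" and "(\<lambda>z. a * z + b) ` Z \<subseteq> W"
  shows "(\<lambda>z. a * z + b) ` Z = W"
proof (rule card_subset_eq[OF \<open>finite W\<close> \<open>_ \<subseteq> W\<close>])
  have "inj_on (\<lambda>z. a * z + b) Z"
    using \<open>a \<noteq> 0\<close> by (auto simp: inj_on_def)
  then show "card ((\<lambda>z. a * z + b) ` Z) = card W"
    using \<open>card Z = card W\<close> by (simp add: card_image)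
qed

lemma affine_into_if_moebius_fixes_infinity:
  fixes \<alpha> \<beta> \<delta> :: complex and Z W :: "complex set"
  assumes "\<alpha> * \<delta> \<noteq> 0"
    and "moebius_app \<alpha> \<beta> 0 \<delta> ` Some ` Z \<subseteq> insert None (Some ` W)"
  shows "\<exists>a b. a \<noteq> 0 \<and> (\<lambda>z. a * z + b) ` Z \<subseteq> W"
proof (intro exI conjI)
  show "\<alpha> / \<delta> \<noteq> 0"
    using assms(1) by simp
  have "(\<alpha> * z + \<beta>) / \<delta> \<in> W" if "z \<in> Z" for z
  proof -
    have "moebius_app \<alpha> \<beta> 0 \<delta> (Some z) \<in> insert None (Some ` W)"
      using assms(2) that by blast
    then show ?thesis
      using assms(1) by (simp add: moebius_app_finite image_iff)
  qed
  then show "(\<lambda>z. \<alpha> / \<delta> * z + \<beta> / \<delta>) ` Z \<subseteq> W"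
    by (auto simp: add_divide_distrib)
qed

lemma affine_into_three_points_if_moebius_infinity_in:
  fixes \<alpha> \<beta> \<gamma> \<delta> p q r :: complex and Z :: "complex set"
  assumes "\<gamma> \<noteq> 0" and det: "\<alpha> * \<delta> - \<beta> * \<gamma> \<noteq> 0" and "distinct [p, q, r]"
    and pole: "\<alpha> / \<gamma> = p"
    and maps: "moebius_app \<alpha> \<beta> \<gamma> \<delta> ` Some ` Z \<subseteq> insert None (Some ` {p, q, r})"
  shows "\<exists>a b. a \<noteq> 0 \<and> (\<lambda>z. a * z + b) ` Z \<subseteq> {p, q, r}"
proof -
  define D where "D = \<beta> * \<gamma> - \<alpha> * \<delta>"
  define c where "c = (q - p) * (r - p)"
  \<comment> \<open>a z + b is the involution applied to \<mu> z; it sends the pole -\<delta>/\<gamma> of \<mu> to p\<close>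
  define a where "a = c * \<gamma>\<^sup>2 / D"
  define b where "b = p + c * \<gamma> * \<delta> / D"
  have "D \<noteq> 0"
    using det unfolding D_def by (auto simp: algebra_simps)
  have "c \<noteq> 0"
    using \<open>distinct [p, q, r]\<close> unfolding c_def by auto
  have affine_eq: "a * z + b = p + c * \<gamma> * (\<gamma> * z + \<delta>) / D" for z
    using \<open>D \<noteq> 0\<close> unfolding a_def b_def by (simp add: field_simps power2_eq_square)
  have "a * z + b \<in> {p, q, r}" if "z \<in> Z" for z
  proof (cases "\<gamma> * z + \<delta> = 0")
    case True
    then show ?thesis by (simp add: affine_eq)
  next
    case False
    define u where "u = (\<alpha> * z + \<beta>) / (\<gamma> * z + \<delta>)"
    have "moebius_app \<alpha> \<beta> \<gamma> \<delta> (Some z) \<in> insert None (Some ` {p, q, r})"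
      using maps \<open>z \<in> Z\<close> by blast
    then have "u \<in> {p, q, r}"
      using False by (simp add: moebius_app_finite u_def image_iff)
    have u_minus_p: "u - p = D / (\<gamma> * (\<gamma> * z + \<delta>))"
      unfolding u_def pole[symmetric] D_def
      using moebius_minus_image_of_infinity[OF \<open>\<gamma> \<noteq> 0\<close> False] .
    then have "u \<noteq> p"
      using \<open>D \<noteq> 0\<close> \<open>\<gamma> \<noteq> 0\<close> False by auto
    have "a * z + b = p + c / (u - p)"
      by (simp add: affine_eq u_minus_p)
    then show ?thesis
      using three_point_involution_swaps[OF \<open>distinct [p, q, r]\<close>] \<open>u \<in> {p, q, r}\<close> \<open>u \<noteq> p\<close>
      unfolding c_def by auto
  qed
  moreover have "a \<noteq> 0"
    using \<open>c \<noteq> 0\<close> \<open>D \<noteq> 0\<close> \<open>\<gamma> \<noteq> 0\<close> unfolding a_def by simp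
  ultimately show ?thesis by blast
qed

lemma affine_into_three_points_if_moebius:
  fixes \<alpha> \<beta> \<gamma> \<delta> w1 w2 w3 :: complex and Z :: "complex set"
  assumes det: "\<alpha> * \<delta> - \<beta> * \<gamma> \<noteq> 0" and "distinct [w1, w2, w3]"
    and maps: "moebius_app \<alpha> \<beta> \<gamma> \<delta> ` insert None (Some ` Z) \<subseteq> insert None (Some ` {w1, w2, w3})"
  shows "\<exists>a b. a \<noteq> 0 \<and> (\<lambda>z. a * z + b) ` Z \<subseteq> {w1, w2, w3}"
proof (cases "\<gamma> = 0")
  case True
  then show ?thesis
    using affine_into_if_moebius_fixes_infinity[of \<alpha> \<delta> \<beta> Z] det maps by auto
next
  case False
  have "moebius_app \<alpha> \<beta> \<gamma> \<delta> None \<in> insert None (Some ` {w1, w2, w3})"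
    using maps by blast
  then have "\<alpha> / \<gamma> \<in> {w1, w2, w3}"
    using False by (simp add: moebius_app_infinity image_iff)
  then obtain q r where "distinct [\<alpha> / \<gamma>, q, r]" and W: "{w1, w2, w3} = {\<alpha> / \<gamma>, q, r}"
    using three_point_set_enumeration_from[OF _ \<open>distinct [w1, w2, w3]\<close>] by blast
  show ?thesis
    using affine_into_three_points_if_moebius_infinity_in[OF False det \<open>distinct [\<alpha> / \<gamma>, q, r]\<close> refl] maps
    unfolding W by auto
qed

theorem lemma1p2:
  fixes z1 z2 z3 w1 w2 w3 :: complex
  assumes "distinct [z1, z2, z3]"
    and "distinct [w1, w2, w3]"
    and "moebius_equivalent {Some z1, Some z2, Some z3, None} {Some w1, Some w2, Some w3, None}"
  shows "\<exists>a b :: complex. a \<noteq> 0 \<and> (\<lambda>z. a * z + b) ` {z1, z2, z3} = {w1, w2, w3}"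
proof -
  have sphere_set: "{Some x, Some y, Some v, None} = insert None (Some ` {x, y, v})" for x y v :: complex
    by auto
  obtain \<alpha> \<beta> \<gamma> \<delta> where det: "\<alpha> * \<delta> - \<beta> * \<gamma> \<noteq> 0"
    and maps: "moebius_app \<alpha> \<beta> \<gamma> \<delta> ` insert None (Some ` {z1, z2, z3}) = insert None (Some ` {w1, w2, w3})"
    using assms(3) unfolding moebius_equivalent_def sphere_set by blast
  obtain a b where "a \<noteq> 0" and "(\<lambda>z. a * z + b) ` {z1, z2, z3} \<subseteq> {w1, w2, w3}"
    using affine_into_three_points_if_moebius[OF det assms(2) equalityD1[OF maps]]
    by blast
  moreover have "card {z1, z2, z3} = card {w1, w2, w3}"
    using assms(1,2) by simp
  ultimately have "(\<lambda>z. a * z + b) ` {z1, z2, z3} = {w1, w2, w3}"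
    by (intro affine_image_eq_if_subset) auto
  with \<open>a \<noteq> 0\<close> show ?thesis
    by blast
qed

end
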